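(* In the standing setting, assume that the self-adjoint operator $A^N$ in $\overline V$ associated with $\mathfrak a$ has no eigenvector belonging to $V_D=\ker j$. Let $\lambda,\mu\in\mathbb R$. Then $\lambda$ is an eigenvalue (equivalently, lies in the spectrum) of the self-adjoint operator $A_\mu$ in $\overline V$ associated with $\mathfrak a_\mu$ if and only if $\mu\in\sigma(\mathcal N_\lambda)$.
   Context: Standing setting: $V,H,K$ complex Hilbert spaces, $V$ embedded in $H$ with compact inclusion $i\colon V\to H$, $j\colon V\to K$ compact linear, $\mathfrak a$ a positive, symmetric, continuous sesquilinear form on $V$ which is $i$-elliptic ($\mathfrak a(u,u)+\omega\|u\|_H^2\ge\delta\|u\|_V^2$ for some $\omega,\delta>0$). $\mathfrak a_\mu(u,v)=\mathfrak a(u,v)-\mu(j(u),j(v))_K$; the operator $B$ in $\overline W$ associated with a form $\mathfrak c$ on a closed subspace $W\subset V$ is: $u\in D(B)$, $Bu=f$ iff $u\in W$, $f\in\overline W$, $\mathfrak c(u,v)=(f,v)_H$ for all $v\in W$ (these have compact resolvent). $\mathfrak b_\lambda(u,v)=\mathfrak a(u,v)-\lambda(u,v)_H$, and $\mathcal N_\lambda=\{(j(u),\psi)\in K\times K: u\in V,\ \mathfrak b_\lambda(u,v)=(\psi,j(v))_K\ \forall v\in V\}$, a self-adjoint graph in $K$ with compact resolvent; its single-valued part $\mathcal N_\lambda^\circ$ is the self-adjoint operator in $\overline{D(\mathcal N_\lambda)}$ with graph $\mathcal N_\lambda\cap(\overline{D(\mathcal N_\lambda)}\times\overline{D(\mathcal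 N_\lambda)})$, and $\sigma(\mathcal N_\lambda):=\sigma(\mathcal N_\lambda^\circ)$, which consists of eigenvalues. *)

theory Defs
  imports "HOL-Analysis.Analysis"
begin

class complex_vector = real_vector +
  fixes scaleC :: "complex \<Rightarrow> 'a \<Rightarrow> 'a" (infixr \<open>*\<^sub>C\<close> 75)
  assumes scaleC_add_right: "c *\<^sub>C (x + y) = c *\<^sub>C x + c *\<^sub>C y"
    and scaleC_add_left: "(b + c) *\<^sub>C x = b *\<^sub>C x + c *\<^sub>C x"
    and scaleC_scaleC: "b *\<^sub>C (c *\<^sub>C x) = (b * c) *\<^sub>C x"
    and scaleC_one: "1 *\<^sub>C x = x"
    and scaleR_scaleC: "scaleR r x = complex_of_real r *\<^sub>C x"

class complex_inner = complex_vector + real_normed_vector +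
  fixes cinner :: "'a \<Rightarrow> 'a \<Rightarrow> complex"
  assumes cinner_commute: "cinner x y = cnj (cinner y x)"
    and cinner_add_left: "cinner (x + y) z = cinner x z + cinner y z"
    and cinner_scaleC_left: "cinner (c *\<^sub>C x) y = c * cinner x y"
    and cinner_self_Re: "0 \<le> Re (cinner x x)"
    and cinner_eq_zero_iff: "cinner x x = 0 \<longleftrightarrow> x = 0"
    and norm_eq_sqrt_cinner: "norm x = sqrt (Re (cinner x x))"

class chilbert_space = complex_inner + complete_space


instantiation complex :: chilbert_space
begin
definition scaleC_complex :: "complex \<Rightarrow> complex \<Rightarrow> complex" where "scaleC_complex c x = c * x"
definition cinner_complex :: "complex \<Rightarrow> complex \<Rightarrow> complex" where "cinner_complex x y = x * cnj y"
instance
proof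
  fix x y z :: complex and b c :: complex and r :: real
  show "c *\<^sub>C (x + y) = c *\<^sub>C x + c *\<^sub>C y" by (simp add: scaleC_complex_def distrib_left)
  show "(b + c) *\<^sub>C x = b *\<^sub>C x + c *\<^sub>C x" by (simp add: scaleC_complex_def distrib_right)
  show "b *\<^sub>C (c *\<^sub>C x) = (b * c) *\<^sub>C x" by (simp add: scaleC_complex_def)
  show "1 *\<^sub>C x = x" by (simp add: scaleC_complex_def)
  show "scaleR r x = complex_of_real r *\<^sub>C x" by (simp add: scaleC_complex_def scaleR_conv_of_real)
  show "cinner x y = cnj (cinner y x)" by (simp add: cinner_complex_def mult.commute)
  show "cinner (x + y) z = cinner x z + cinner y z" by (simp add: cinner_complex_def distrib_right)
  show "cinner (c *\<^sub>C x) y = c * cinner x y" by (simp add: cinner_complex_def scaleC_complex_def)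
  show "0 \<le> Re (cinner x x)" by (simp add: cinner_complex_def)
  show "cinner x x = 0 \<longleftrightarrow> x = 0" by (simp add: cinner_complex_def)
  show "norm x = sqrt (Re (cinner x x))" by (simp add: cinner_complex_def cmod_def power2_eq_square)
qed
end

definition clinear_map :: "('a::complex_vector \<Rightarrow> 'b::complex_vector) \<Rightarrow> bool" where
  "clinear_map f \<longleftrightarrow> (\<forall>x y. f (x + y) = f x + f y) \<and> (\<forall>c x. f (c *\<^sub>C x) = c *\<^sub>C f x)"

definition compact_clinear :: "('a::{complex_vector,real_normed_vector} \<Rightarrow> 'b::{complex_vector,real_normed_vector}) \<Rightarrow> bool" where
  "compact_clinear f \<longleftrightarrow> clinear_map f \<and> (\<forall>S. bounded S \<longrightarrow> compact (closure (f ` S)))"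

definition sesquilinear :: "('a::complex_vector \<Rightarrow> 'a \<Rightarrow> complex) \<Rightarrow> bool" where
  "sesquilinear a \<longleftrightarrow>
     (\<forall>u w v. a (u + w) v = a u v + a w v) \<and> (\<forall>c u v. a (c *\<^sub>C u) v = c * a u v) \<and>
     (\<forall>u v w. a u (v + w) = a u v + a u w) \<and> (\<forall>c u v. a u (c *\<^sub>C v) = cnj c * a u v)"

definition form_symmetric :: "('a \<Rightarrow> 'a \<Rightarrow> complex) \<Rightarrow> bool" where
  "form_symmetric a \<longleftrightarrow> (\<forall>u v. a u v = cnj (a v u))"

definition form_positive :: "('a \<Rightarrow> 'a \<Rightarrow> complex) \<Rightarrow> bool" where
  "form_positive a \<longleftrightarrow> (\<forall>u. 0 \<le> Re (a u u))"

definition form_continuous :: "('a::real_normed_vector \<Rightarrow> 'a \<Rightarrow> complex) \<Rightarrow> bool" where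
  "form_continuous a \<longleftrightarrow> (\<exists>C. \<forall>u v. cmod (a u v) \<le> C * norm u * norm v)"

definition form_elliptic :: "('v::real_normed_vector \<Rightarrow> 'v \<Rightarrow> complex) \<Rightarrow> ('v \<Rightarrow> 'h::real_normed_vector) \<Rightarrow> bool" where
  "form_elliptic a i \<longleftrightarrow> (\<exists>\<omega> > 0. \<exists>\<delta> > 0. \<forall>u. Re (a u u) + \<omega> * (norm (i u))\<^sup>2 \<ge> \<delta> * (norm u)\<^sup>2)"

text \<open>The operator in \<open>closure (range i)\<close> (i.e. \<open>\<overline>V\<close> in \<open>H\<close>) associated with a form \<open>c\<close> on \<open>V\<close>
  (here \<open>W = V\<close>), given by its graph in \<open>H \<times> H\<close>:
  \<open>i u \<in> D(B)\<close>, \<open>B (i u) = f\<close> iff \<open>f \<in> \<overline>V\<close> and \<open>c(u,v) = (f, i v)\<^sub>H\<close> for all \<open>v \<in> V\<close>.\<close>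
definition assoc_op :: "('v \<Rightarrow> 'h::complex_inner) \<Rightarrow> ('v \<Rightarrow> 'v \<Rightarrow> complex) \<Rightarrow> ('h \<times> 'h) set" where
  "assoc_op i c = {(i u, f) | u f. f \<in> closure (range i) \<and> (\<forall>v. c u v = cinner f (i v))}"

definition eigenvector_of :: "('h \<times> 'h::complex_vector) set \<Rightarrow> 'h \<Rightarrow> bool" where
  "eigenvector_of G x \<longleftrightarrow> x \<noteq> 0 \<and> (\<exists>c. (x, c *\<^sub>C x) \<in> G)"

definition eigenvalue_of :: "('h \<times> 'h::complex_vector) set \<Rightarrow> complex \<Rightarrow> bool" where
  "eigenvalue_of G c \<longleftrightarrow> (\<exists>x. x \<noteq> 0 \<and> (x, c *\<^sub>C x) \<in> G)"

text \<open>Resolvent set and spectrum of an operator (given by its graph \<open>G\<close>) in the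
  Hilbert space \<open>X\<close>: \<open>\<mu> \<in> \<rho>\<close> iff \<open>G - \<mu>\<close> maps \<open>D(G)\<close> onto \<open>X\<close> with bounded inverse.\<close>
definition resolvent_set_op :: "'h::{complex_vector,real_normed_vector} set \<Rightarrow> ('h \<times> 'h) set \<Rightarrow> complex set" where
  "resolvent_set_op X G = {\<mu>. (\<forall>y\<in>X. \<exists>x z. (x, z) \<in> G \<and> z - \<mu> *\<^sub>C x = y) \<and>
       (\<exists>C. \<forall>(x, z)\<in>G. norm x \<le> C * norm (z - \<mu> *\<^sub>C x))}"

definition spectrum_op :: "'h::{complex_vector,real_normed_vector} set \<Rightarrow> ('h \<times> 'h) set \<Rightarrow> complex set" where
  "spectrum_op X G = UNIV - resolvent_set_op X G"

definition DtN_graph :: "('v \<Rightarrow> 'h::complex_inner) \<Rightarrow> ('v \<Rightarrow> 'k::complex_inner) \<Rightarrow>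
    ('v \<Rightarrow> 'v \<Rightarrow> complex) \<Rightarrow> real \<Rightarrow> ('k \<times> 'k) set" where
  "DtN_graph i j a lam = {(j u, \<psi>) | u \<psi>.
      \<forall>v. a u v - complex_of_real lam * cinner (i u) (i v) = cinner \<psi> (j v)}"

definition single_valued_part :: "('k::topological_space \<times> 'k) set \<Rightarrow> ('k \<times> 'k) set" where
  "single_valued_part N = N \<inter> (closure (Domain N) \<times> closure (Domain N))"

definition graph_spectrum :: "('k::{complex_vector,real_normed_vector} \<times> 'k) set \<Rightarrow> complex set" where
  "graph_spectrum N = spectrum_op (closure (Domain N)) (single_valued_part N)"

end

theory Submission
  imports Defs
begin

text \<open>
  By definition of the associated operator, \<open>\<lambda>\<close> is an eigenvalue of \<open>A\<^sub>\<mu>\<close> iff the form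
  \<open>a(u,v) - \<lambda>(u,v)\<^sub>H - \<mu>(j u, j v)\<^sub>K\<close> has a nonzero kernel vector \<open>u\<close>. Then \<open>j u \<noteq> 0\<close>, as otherwise
  \<open>u\<close> would be an eigenvector of \<open>A\<^sup>N\<close> in \<open>V\<^sub>D\<close>, and \<open>(j u, \<mu> j u) \<in> \<N>\<^sub>\<lambda>\<close>, so \<open>\<mu>\<close> is an eigenvalue of
  \<open>\<N>\<^sub>\<lambda>\<degree>\<close>. If instead the kernel is trivial, the form is a coercive form (by ellipticity, after adding
  \<open>\<omega>(u,v)\<^sub>H\<close>) minus a perturbation which is compact because \<open>i\<close> and \<open>j\<close> are. The Fredholm alternative
  then gives an a priori estimate of \<open>u\<close> by the dual norm of the form at \<open>u\<close>, and solvability of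
  \<open>form(u,\<cdot>) = (\<psi>, j \<cdot>)\<^sub>K\<close> for every \<open>\<psi>\<close>; together these say that \<open>\<N>\<^sub>\<lambda>\<degree> - \<mu>\<close> is onto with a
  bounded inverse.
\<close>

section \<open>Complex inner products, linear maps and sesquilinear forms\<close>

lemma cinner_zero_left [simp]: "cinner 0 y = 0"
  using cinner_add_left[of 0 0 y] by simp

lemma cinner_add_right: "cinner x (y + z) = cinner x y + cinner x z"
  using cinner_commute[of x "y + z"] cinner_commute[of x y] cinner_commute[of x z]
    cinner_add_left[of y z x]
  by simp

lemma cinner_zero_right [simp]: "cinner x 0 = 0"
  using cinner_add_right[of x 0 0] by simp

lemma cinner_scaleC_right: "cinner x (c *\<^sub>C y) = cnj c * cinner x y"
  using cinner_commute[of x "c *\<^sub>C y"] cinner_commute[of x y] cinner_scaleC_left[of c y x]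
  by simp

lemma cinner_diff_left: "cinner (x - y) z = cinner x z - cinner y z"
proof -
  have "x - y = x + complex_of_real (-1) *\<^sub>C y"
    by (metis scaleR_scaleC scaleR_minus1_left diff_conv_add_uminus)
  then show ?thesis
    by (simp only: cinner_add_left cinner_scaleC_left) simp
qed

lemma cinner_diff_right: "cinner x (y - z) = cinner x y - cinner x z"
  using cinner_commute[of x "y - z"] cinner_commute[of x y] cinner_commute[of x z]
    cinner_diff_left[of y z x]
  by simp

lemma cinner_self_norm: "cinner x x = complex_of_real ((norm x)\<^sup>2)"
proof (rule complex_eqI)
  show "Re (cinner x x) = Re (complex_of_real ((norm x)\<^sup>2))"
    by (simp add: norm_eq_sqrt_cinner cinner_self_Re)
  have "Im (cnj (cinner x x)) = Im (cinner x x)"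
    by (simp only: cinner_commute[of x x, symmetric])
  then show "Im (cinner x x) = Im (complex_of_real ((norm x)\<^sup>2))"
    by simp
qed

lemma cinner_cauchy_schwarz: "cmod (cinner x y) \<le> norm x * norm y"
proof (cases "y = 0")
  case True
  then show ?thesis by simp
next
  case False
  define s where "s = cinner x y"
  define Y where "Y = (norm y)\<^sup>2"
  have "Y > 0"
    using False by (simp add: Y_def)
  define w where "w = complex_of_real Y *\<^sub>C x - s *\<^sub>C y"
  have "cinner w w = complex_of_real (Y * Y * (norm x)\<^sup>2 - Y * (cmod s)\<^sup>2)"
    using cinner_commute[of y x] complex_norm_square[of s]
    unfolding w_def cinner_diff_left cinner_diff_right cinner_scaleC_left cinner_scaleC_right
      cinner_self_norm[of x] cinner_self_norm[of y] Y_def[symmetric] s_def[symmetric]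
    by (simp add: algebra_simps)
  then have "0 \<le> Y * Y * (norm x)\<^sup>2 - Y * (cmod s)\<^sup>2"
    using cinner_self_Re[of w] by (metis Re_complex_of_real)
  then have "Y * (cmod s)\<^sup>2 \<le> Y * (Y * (norm x)\<^sup>2)"
    by (simp add: algebra_simps)
  then have "(cmod s)\<^sup>2 \<le> Y * (norm x)\<^sup>2"
    using \<open>Y > 0\<close> by simp
  then have "(cmod s)\<^sup>2 \<le> (norm x * norm y)\<^sup>2"
    by (simp add: Y_def power_mult_distrib mult.commute)
  then show ?thesis
    unfolding s_def by (rule power2_le_imp_le) simp
qed

lemma bounded_bilinear_cinner: "bounded_bilinear (cinner :: 'a::complex_inner \<Rightarrow> 'a \<Rightarrow> complex)"
proof
  fix x y z :: 'a and r :: real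
  show "cinner (x + y) z = cinner x z + cinner y z"
    by (rule cinner_add_left)
  show "cinner x (y + z) = cinner x y + cinner x z"
    by (rule cinner_add_right)
  show "cinner (r *\<^sub>R x) y = r *\<^sub>R cinner x y"
    by (simp add: scaleR_scaleC[of r x] cinner_scaleC_left scaleR_conv_of_real)
  show "cinner x (r *\<^sub>R y) = r *\<^sub>R cinner x y"
    by (simp add: scaleR_scaleC[of r y] cinner_scaleC_right scaleR_conv_of_real)
  show "\<exists>K. \<forall>x y :: 'a. cmod (cinner x y) \<le> norm x * norm y * K"
    by (intro exI[of _ 1] allI) (simp add: cinner_cauchy_schwarz)
qed

lemma clinear_map_add: "clinear_map f \<Longrightarrow> f (x + y) = f x + f y"
  unfolding clinear_map_def by blast

lemma clinear_map_scaleC: "clinear_map f \<Longrightarrow> f (c *\<^sub>C x) = c *\<^sub>C f x"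
  unfolding clinear_map_def by blast

lemma clinear_map_scaleR: "clinear_map f \<Longrightarrow> f (r *\<^sub>R x) = r *\<^sub>R f x"
  by (simp add: scaleR_scaleC clinear_map_scaleC)

lemma clinear_map_zero: "clinear_map f \<Longrightarrow> f 0 = 0"
  using clinear_map_scaleR[of f 0 0] by simp

lemma clinear_map_diff: "clinear_map f \<Longrightarrow> f (x - y) = f x - f y"
  using clinear_map_add[of f x "- y"] clinear_map_scaleR[of f "-1" y] by simp

lemma compact_clinear_bound:
  assumes "compact_clinear f"
  shows "\<exists>K>0. \<forall>x. norm (f x) \<le> K * norm x"
proof -
  have lin: "clinear_map f"
    using assms unfolding compact_clinear_def by blast
  have "bounded (closure (f ` cball 0 1))"
    using assms unfolding compact_clinear_def by (blast intro: compact_imp_bounded)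
  then obtain B where B: "\<And>y. y \<in> f ` cball 0 1 \<Longrightarrow> norm y \<le> B"
    unfolding bounded_iff by (meson closure_subset subsetD)
  have "norm (f x) \<le> max B 1 * norm x" for x
  proof (cases "x = 0")
    case True
    then show ?thesis
      using clinear_map_scaleR[OF lin, of 0 0] by simp
  next
    case False
    have "norm (f ((1 / norm x) *\<^sub>R x)) \<le> B"
      using False by (intro B imageI) simp
    have "f x = norm x *\<^sub>R f ((1 / norm x) *\<^sub>R x)"
      using False by (simp add: clinear_map_scaleR[OF lin])
    then have "norm (f x) = norm x * norm (f ((1 / norm x) *\<^sub>R x))"
      by simp
    also have "\<dots> \<le> norm x * max B 1"
      using \<open>norm (f ((1 / norm x) *\<^sub>R x)) \<le> B\<close> by (intro mult_left_mono) auto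
    finally show ?thesis
      by (simp add: mult.commute)
  qed
  then show ?thesis
    by (intro exI[of _ "max B 1"]) auto
qed

lemma compact_clinear_bounded_linear:
  assumes "compact_clinear f"
  shows "bounded_linear f"
proof -
  have lin: "clinear_map f"
    using assms unfolding compact_clinear_def by blast
  obtain K where "\<And>x. norm (f x) \<le> K * norm x"
    using compact_clinear_bound[OF assms] by blast
  then show ?thesis
    by (intro bounded_linear_intro[of _ K]) (simp_all add: clinear_map_add[OF lin] clinear_map_scaleR[OF lin] mult.commute)
qed

lemma compact_clinear_convergent_subseq:
  fixes u :: "nat \<Rightarrow> 'a::{complex_vector,real_normed_vector}"
  assumes "compact_clinear f" and "\<And>n. norm (u n) \<le> B"
  shows "\<exists>r l. strict_mono r \<and> (\<lambda>n. f (u (r n))) \<longlonglongrightarrow> l"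
proof -
  have "bounded (range u)"
    using assms(2) unfolding bounded_iff by blast
  then have "seq_compact (closure (f ` range u))"
    using assms(1) unfolding compact_clinear_def by (blast intro: compact_imp_seq_compact)
  moreover have "\<forall>n. (f \<circ> u) n \<in> closure (f ` range u)"
    using closure_subset by fastforce
  ultimately obtain l r where "l \<in> closure (f ` range u)" "strict_mono r" "(f \<circ> u \<circ> r) \<longlonglongrightarrow> l"
    by (rule seq_compactE)
  then show ?thesis
    unfolding o_def by blast
qed

lemma compact_clinear_common_convergent_subseq:
  fixes u :: "nat \<Rightarrow> 'a::{complex_vector,real_normed_vector}"
  assumes "compact_clinear f" and "compact_clinear g" and "\<And>n. norm (u n) \<le> B"
  shows "\<exists>s. strict_mono s \<and> convergent (\<lambda>n. f (u (s n))) \<and> convergent (\<lambda>n. g (u (s n)))"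
proof -
  obtain r l where r: "strict_mono r" and l: "(\<lambda>n. f (u (r n))) \<longlonglongrightarrow> l"
    using compact_clinear_convergent_subseq[OF assms(1), of u B] assms(3) by blast
  obtain r' l' where r': "strict_mono r'" and l': "(\<lambda>n. g (u (r (r' n)))) \<longlonglongrightarrow> l'"
    using compact_clinear_convergent_subseq[OF assms(2), of "u \<circ> r" B] assms(3) by auto
  have "(\<lambda>n. f (u (r (r' n)))) \<longlonglongrightarrow> l"
    using LIMSEQ_subseq_LIMSEQ[OF l r'] by (simp add: o_def)
  then show ?thesis
    using l' strict_mono_o[OF r r'] unfolding convergent_def o_def by blast
qed

lemma sesquilinear_scaleC_left: "sesquilinear a \<Longrightarrow> a (c *\<^sub>C u) v = c * a u v"
  unfolding sesquilinear_def by blast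

lemma sesquilinear_scaleC_right: "sesquilinear a \<Longrightarrow> a u (c *\<^sub>C v) = cnj c * a u v"
  unfolding sesquilinear_def by blast

lemma sesquilinear_bounded_bilinear:
  assumes sesq: "sesquilinear a" and bound: "\<And>u v. cmod (a u v) \<le> C * norm u * norm v"
  shows "bounded_bilinear a"
proof
  fix u u' v v' and r :: real
  show "a (u + u') v = a u v + a u' v" and "a u (v + v') = a u v + a u v'"
    using sesq unfolding sesquilinear_def by blast+
  show "a (r *\<^sub>R u) v = r *\<^sub>R a u v"
    by (simp add: scaleR_scaleC[of r u] sesquilinear_scaleC_left[OF sesq] scaleR_conv_of_real)
  show "a u (r *\<^sub>R v) = r *\<^sub>R a u v"
    by (simp add: scaleR_scaleC[of r v] sesquilinear_scaleC_right[OF sesq] scaleR_conv_of_real)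
  show "\<exists>K. \<forall>u v. cmod (a u v) \<le> norm u * norm v * K"
    using bound by (intro exI[of _ C]) (simp add: mult.commute mult.left_commute)
qed

lemma sesquilinear_minus_cinner:
  assumes "sesquilinear a" and "clinear_map f"
  shows "sesquilinear (\<lambda>u v. a u v - k * cinner (f u) (f v))"
  using assms unfolding sesquilinear_def
  by (simp add: clinear_map_add clinear_map_scaleC cinner_add_left cinner_add_right
      cinner_scaleC_left cinner_scaleC_right algebra_simps)

lemma form_symmetric_minus_cinner:
  assumes "form_symmetric a"
  shows "form_symmetric (\<lambda>u v. a u v - complex_of_real r * cinner (f u) (f v))"
  unfolding form_symmetric_def
proof (intro allI)
  fix u v
  have "a u v = cnj (a v u)"
    using assms unfolding form_symmetric_def by blast
  then show "a u v - complex_of_real r * cinner (f u) (f v) =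
      cnj (a v u - complex_of_real r * cinner (f v) (f u))"
    using cinner_commute[of "f u" "f v"] by simp
qed

lemma cmod_minus_cinner_le:
  assumes "\<And>u v. cmod (a u v) \<le> C * norm u * norm v" and "\<And>x. norm (f x) \<le> K * norm x"
  shows "cmod (a u v - k * cinner (f u) (f v)) \<le> (C + cmod k * K\<^sup>2) * norm u * norm v"
proof -
  have "cmod (cinner (f u) (f v)) \<le> (K * norm u) * (K * norm v)"
    using cinner_cauchy_schwarz[of "f u" "f v"] assms(2)[of u] assms(2)[of v]
    by (meson mult_mono norm_ge_zero order_trans)
  then have "cmod (k * cinner (f u) (f v)) \<le> cmod k * ((K * norm u) * (K * norm v))"
    unfolding norm_mult by (rule mult_left_mono) simp
  then have "cmod (a u v - k * cinner (f u) (f v)) \<le> C * norm u * norm v + cmod k * ((K * norm u) * (K * norm v))"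
    using norm_triangle_ineq4[of "a u v" "k * cinner (f u) (f v)"] assms(1)[of u v] by linarith
  then show ?thesis
    by (simp add: algebra_simps power2_eq_square)
qed

lemma Cauchy_if_dominated:
  fixes x :: "nat \<Rightarrow> 'a::real_normed_vector" and u :: "nat \<Rightarrow> 'b::real_normed_vector"
  assumes "Cauchy x" and "\<And>m n. norm (u m - u n) \<le> L * norm (x m - x n)"
  shows "Cauchy u"
proof (rule CauchyI)
  fix r :: real
  assume "r > 0"
  then obtain N where N: "\<forall>m\<ge>N. \<forall>n\<ge>N. norm (x m - x n) < r / (\<bar>L\<bar> + 1)"
    using CauchyD[OF assms(1), of "r / (\<bar>L\<bar> + 1)"] by auto
  have "norm (u m - u n) < r" if "m \<ge> N" "n \<ge> N" for m n
  proof -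
    have "L * norm (x m - x n) \<le> (\<bar>L\<bar> + 1) * norm (x m - x n)"
      by (intro mult_right_mono) auto
    also have "\<dots> < r"
      using N that by (simp add: field_simps add_pos_nonneg)
    finally show ?thesis
      using assms(2)[of m n] by linarith
  qed
  then show "\<exists>N. \<forall>m\<ge>N. \<forall>n\<ge>N. norm (u m - u n) < r"
    by blast
qed

section \<open>Coercive hermitian forms: projection and Riesz representation\<close>

definition csubspace :: "'a::complex_vector set \<Rightarrow> bool" where
  "csubspace M \<longleftrightarrow> 0 \<in> M \<and> (\<forall>x\<in>M. \<forall>y\<in>M. x + y \<in> M) \<and> (\<forall>c. \<forall>x\<in>M. c *\<^sub>C x \<in> M)"

definition bounded_antilinear :: "('a::{complex_vector,real_normed_vector} \<Rightarrow> complex) \<Rightarrow> bool" where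
  "bounded_antilinear l \<longleftrightarrow> bounded_linear l \<and> (\<forall>c x. l (c *\<^sub>C x) = cnj c * l x)"

lemma bounded_antilinear_kernel:
  assumes "bounded_antilinear l"
  shows "closed {v. l v = 0}" and "csubspace {v. l v = 0}"
proof -
  interpret l: bounded_linear l
    using assms unfolding bounded_antilinear_def by blast
  show "closed {v. l v = 0}"
    by (intro closed_Collect_eq l.continuous_on continuous_on_id continuous_on_const)
  show "csubspace {v. l v = 0}"
    using assms unfolding csubspace_def bounded_antilinear_def by (simp add: l.zero l.add)
qed

lemma linear_le_quadratic_imp_zero:
  fixes A r :: real
  assumes "A \<ge> 0" and "\<And>t. 2 * t * r \<le> t\<^sup>2 * A"
  shows "r = 0"
proof -
  define t where "t = r / (A + 1)"
  have "A + 1 > 0"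
    using assms(1) by simp
  then have t: "(A + 1) * t = r"
    unfolding t_def by simp
  have "(A + 1)\<^sup>2 * (2 * t * r) \<le> (A + 1)\<^sup>2 * (t\<^sup>2 * A)"
    using assms(2)[of t] by (simp add: mult_left_mono)
  then have "2 * ((A + 1) * t) * r * (A + 1) \<le> ((A + 1) * t)\<^sup>2 * A"
    by (simp add: power2_eq_square algebra_simps)
  then have "2 * r * r * (A + 1) \<le> r\<^sup>2 * A"
    unfolding t .
  then have "r\<^sup>2 * (A + 2) \<le> 0"
    by (simp add: algebra_simps power2_eq_square)
  then show ?thesis
    using assms(1) by (simp add: mult_le_0_iff)
qed

locale coercive_form =
  fixes e :: "'v::chilbert_space \<Rightarrow> 'v \<Rightarrow> complex" and C \<delta> :: real
  assumes sesquilinear: "sesquilinear e"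
    and symmetric: "form_symmetric e"
    and bound: "\<And>u v. cmod (e u v) \<le> C * norm u * norm v"
    and coercive: "\<And>u. \<delta> * (norm u)\<^sup>2 \<le> Re (e u u)"
    and delta_pos: "\<delta> > 0"
begin

sublocale bounded_bilinear e
  by (rule sesquilinear_bounded_bilinear[OF sesquilinear bound])

lemma swap: "e v u = cnj (e u v)"
  using symmetric unfolding form_symmetric_def by blast

lemma Re_self_nonneg: "0 \<le> Re (e u u)"
  using coercive[of u] delta_pos by (meson order_trans zero_le_mult_iff zero_le_power2 less_imp_le)

lemma Re_self_add: "Re (e (x + y) (x + y)) = Re (e x x) + 2 * Re (e x y) + Re (e y y)"
  using swap[of y x] by (simp add: add_left add_right)

lemma Re_self_scaleR: "Re (e (t *\<^sub>R x) (t *\<^sub>R x)) = t\<^sup>2 * Re (e x x)"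
  by (simp add: scaleR_left scaleR_right scaleR_conv_of_real power2_eq_square)

lemma parallelogram:
  "Re (e (x + y) (x + y)) + Re (e (x - y) (x - y)) = 2 * Re (e x x) + 2 * Re (e y y)"
  using Re_self_add[of x y] Re_self_add[of x "- y"]
  by (simp add: minus_left minus_right)

lemma minimizing_sequence_Cauchy:
  fixes x :: "nat \<Rightarrow> 'v"
  assumes M: "csubspace M" and d: "\<And>m. m \<in> M \<Longrightarrow> d \<le> Re (e (g - m) (g - m))"
    and xM: "\<And>n. x n \<in> M" and x: "\<And>n. Re (e (g - x n) (g - x n)) \<le> d + \<epsilon> n"
    and \<epsilon>: "\<epsilon> \<longlonglongrightarrow> 0"
  shows "Cauchy x"
proof -
  have estimate: "\<delta> * (norm (x m - x n))\<^sup>2 \<le> 2 * \<epsilon> m + 2 * \<epsilon> n" for m n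
  proof -
    define mid where "mid = (1/2::real) *\<^sub>R (x m + x n)"
    have "mid \<in> M"
      using M xM unfolding csubspace_def mid_def scaleR_scaleC by blast
    have "(g - x n) + (g - x m) = (2::real) *\<^sub>R (g - mid)"
      unfolding mid_def by (simp add: algebra_simps scaleR_2)
    then have "Re (e ((g - x n) + (g - x m)) ((g - x n) + (g - x m))) = 4 * Re (e (g - mid) (g - mid))"
      by (simp add: Re_self_scaleR)
    then show ?thesis
      using parallelogram[of "g - x n" "g - x m"] d[OF \<open>mid \<in> M\<close>] x[of m] x[of n]
        coercive[of "x m - x n"]
      by simp
  qed
  show ?thesis
  proof (rule CauchyI)
    fix r :: real
    assume "r > 0"
    then have "\<delta> * r\<^sup>2 / 4 > 0"
      using delta_pos by simp
    then obtain N where N: "\<And>n. n \<ge> N \<Longrightarrow> \<epsilon> n < \<delta> * r\<^sup>2 / 4"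
      using order_tendstoD(2)[OF \<epsilon>] unfolding eventually_sequentially by blast
    have "norm (x m - x n) < r" if "m \<ge> N" "n \<ge> N" for m n
    proof -
      have "\<delta> * (norm (x m - x n))\<^sup>2 < \<delta> * r\<^sup>2"
        using estimate[of m n] N[OF \<open>m \<ge> N\<close>] N[OF \<open>n \<ge> N\<close>] by linarith
      then have "(norm (x m - x n))\<^sup>2 < r\<^sup>2"
        using delta_pos by simp
      then show ?thesis
        using \<open>r > 0\<close> by (simp add: power_less_imp_less_base)
    qed
    then show "\<exists>N. \<forall>m\<ge>N. \<forall>n\<ge>N. norm (x m - x n) < r"
      by blast
  qed
qed

lemma minimizer_exists:
  assumes "closed M" and M: "csubspace M"
  shows "\<exists>p\<in>M. \<forall>m\<in>M. Re (e (g - p) (g - p)) \<le> Re (e (g - m) (g - m))"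
proof -
  define Q where "Q m = Re (e (g - m) (g - m))" for m
  define d where "d = (INF m\<in>M. Q m)"
  have bdd: "bdd_below (Q ` M)"
    unfolding Q_def by (rule bdd_belowI2[of _ 0]) (rule Re_self_nonneg)
  have d: "d \<le> Q m" if "m \<in> M" for m
    unfolding d_def using bdd that by (rule cINF_lower)
  have "M \<noteq> {}"
    using M unfolding csubspace_def by blast
  then have "\<forall>n. \<exists>y. y \<in> M \<and> Q y < d + inverse (real (Suc n))"
    using cINF_less_iff[OF _ bdd] unfolding d_def by (metis less_add_same_cancel1 positive_imp_inverse_positive of_nat_0_less_iff zero_less_Suc)
  then obtain x where xM: "\<And>n. x n \<in> M" and x: "\<And>n. Q (x n) < d + inverse (real (Suc n))"
    by metis
  have "Cauchy x"
    using M d xM x LIMSEQ_inverse_real_of_nat unfolding Q_def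
    by (intro minimizing_sequence_Cauchy[where \<epsilon> = "\<lambda>n. inverse (real (Suc n))"]) (auto intro: less_imp_le)
  then obtain p where p: "x \<longlonglongrightarrow> p"
    using Cauchy_convergent_iff convergent_def by blast
  have "p \<in> M"
    using \<open>closed M\<close> xM p closed_sequential_limits by blast
  have "(\<lambda>n. Q (x n)) \<longlonglongrightarrow> Q p"
    unfolding Q_def using p by (intro tendsto_Re tendsto tendsto_diff tendsto_const)
  moreover have "(\<lambda>n. d + inverse (real (Suc n))) \<longlonglongrightarrow> d + 0"
    by (intro tendsto_add tendsto_const LIMSEQ_inverse_real_of_nat)
  ultimately have "Q p \<le> d"
    using x by (intro LIMSEQ_le[where X = "\<lambda>n. Q (x n)"]) (auto intro: less_imp_le)
  then show ?thesis
    using \<open>p \<in> M\<close> d unfolding Q_def by (blast intro: order_trans)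
qed

lemma minimizer_orthogonal:
  assumes M: "csubspace M" and "p \<in> M"
    and min: "\<And>m. m \<in> M \<Longrightarrow> Re (e (g - p) (g - p)) \<le> Re (e (g - m) (g - m))"
    and "m \<in> M"
  shows "e (g - p) m = 0"
proof -
  have Re_zero: "Re (e (g - p) m') = 0" if "m' \<in> M" for m'
  proof (rule linear_le_quadratic_imp_zero)
    show "0 \<le> Re (e m' m')"
      by (rule Re_self_nonneg)
    fix t :: real
    have "p + t *\<^sub>R m' \<in> M"
      using M \<open>p \<in> M\<close> that unfolding csubspace_def scaleR_scaleC by blast
    moreover have "g - (p + t *\<^sub>R m') = (g - p) + (- t) *\<^sub>R m'"
      by simp
    ultimately have "Re (e (g - p) (g - p)) \<le> Re (e ((g - p) + (- t) *\<^sub>R m') ((g - p) + (- t) *\<^sub>R m'))"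
      using min by metis
    then show "2 * t * Re (e (g - p) m') \<le> t\<^sup>2 * Re (e m' m')"
      unfolding Re_self_add Re_self_scaleR by (simp add: minus_right scaleR_right scaleR_conv_of_real)
  qed
  show ?thesis
  proof (rule complex_eqI)
    show "Re (e (g - p) m) = Re 0"
      using Re_zero \<open>m \<in> M\<close> by simp
    have "\<i> *\<^sub>C m \<in> M"
      using M \<open>m \<in> M\<close> unfolding csubspace_def by blast
    then show "Im (e (g - p) m) = Im 0"
      using Re_zero[OF \<open>\<i> *\<^sub>C m \<in> M\<close>] by (simp add: sesquilinear_scaleC_right[OF sesquilinear])
  qed
qed

lemma orthogonal_projection_exists:
  assumes "closed M" and "csubspace M"
  shows "\<exists>p\<in>M. \<forall>m\<in>M. e (g - p) m = 0"
  using minimizer_exists[OF assms] minimizer_orthogonal[OF assms(2)] by blast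

lemma riesz_representation:
  assumes "bounded_antilinear l"
  shows "\<exists>h. \<forall>v. l v = e h v"
proof (cases "\<forall>v. l v = 0")
  case True
  then show ?thesis
    by (intro exI[of _ 0]) (simp add: zero_left)
next
  case False
  then obtain z where "l z \<noteq> 0"
    by blast
  have anti: "\<And>c v. l (c *\<^sub>C v) = cnj c * l v"
    using assms unfolding bounded_antilinear_def by blast
  interpret l: bounded_linear l
    using assms unfolding bounded_antilinear_def by blast
  define M where "M = {v. l v = 0}"
  note bounded_antilinear_kernel[OF assms, folded M_def]
  then obtain p where "p \<in> M" and orth: "\<And>m. m \<in> M \<Longrightarrow> e (z - p) m = 0"
    using orthogonal_projection_exists by blast
  define z0 where "z0 = z - p"
  have "l z0 = l z"
    using \<open>p \<in> M\<close> unfolding z0_def M_def by (simp add: l.diff)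
  then have "z0 \<noteq> 0"
    using \<open>l z \<noteq> 0\<close> l.zero by auto
  then have "0 < \<delta> * (norm z0)\<^sup>2"
    using delta_pos by simp
  then have "e z0 z0 \<noteq> 0"
    using coercive[of z0] by auto
  \<comment> \<open>\<open>z0\<close> is \<open>e\<close>-orthogonal to \<open>ker l\<close>, which contains \<open>l v z0 - l z0 v\<close> up to conjugation.\<close>
  have "l v = e ((l z0 / e z0 z0) *\<^sub>C z0) v" for v
  proof -
    have "l (cnj (l v) *\<^sub>C z0 - cnj (l z0) *\<^sub>C v) = 0"
      by (simp add: anti l.diff)
    then have "e z0 (cnj (l v) *\<^sub>C z0 - cnj (l z0) *\<^sub>C v) = 0"
      unfolding z0_def by (intro orth) (simp add: M_def z0_def)
    then have "l v * e z0 z0 = l z0 * e z0 v"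
      by (simp add: diff_right sesquilinear_scaleC_right[OF sesquilinear])
    then show ?thesis
      using \<open>e z0 z0 \<noteq> 0\<close> by (simp add: sesquilinear_scaleC_left[OF sesquilinear] field_simps)
  qed
  then show ?thesis
    by blast
qed

end

section \<open>Compact perturbations of coercive forms: the Fredholm alternative\<close>

locale compact_perturbation = coercive_form e C \<delta>
  for e :: "'v::chilbert_space \<Rightarrow> 'v \<Rightarrow> complex" and C \<delta> +
  fixes i :: "'v \<Rightarrow> 'h::chilbert_space" and j :: "'v \<Rightarrow> 'k::chilbert_space"
    and \<alpha> \<beta> :: real and c :: "'v \<Rightarrow> 'v \<Rightarrow> complex"
  assumes i_compact: "compact_clinear i" and j_compact: "compact_clinear j"
    and perturbed: "\<And>u v. c u v = e u v - complex_of_real \<alpha> * cinner (i u) (i v)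
      - complex_of_real \<beta> * cinner (j u) (j v)"
begin

lemma i_clinear: "clinear_map i"
  using i_compact unfolding compact_clinear_def by blast

lemma j_clinear: "clinear_map j"
  using j_compact unfolding compact_clinear_def by blast

lemma c_sesquilinear: "sesquilinear c"
  using sesquilinear_minus_cinner[OF sesquilinear_minus_cinner[OF sesquilinear i_clinear] j_clinear]
  unfolding perturbed[abs_def] .

lemma c_symmetric: "form_symmetric c"
  using form_symmetric_minus_cinner[OF form_symmetric_minus_cinner[OF symmetric]]
  unfolding perturbed[abs_def] .

lemma c_bound: "\<exists>C'. \<forall>u v. cmod (c u v) \<le> C' * norm u * norm v"
proof -
  obtain Ki where Ki: "\<And>x. norm (i x) \<le> Ki * norm x"
    using compact_clinear_bound[OF i_compact] by blast
  obtain Kj where Kj: "\<And>x. norm (j x) \<le> Kj * norm x"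
    using compact_clinear_bound[OF j_compact] by blast
  show ?thesis
    unfolding perturbed by (blast intro: cmod_minus_cinner_le[OF cmod_minus_cinner_le[OF bound Ki] Kj])
qed

sublocale c: bounded_bilinear c
  using c_bound sesquilinear_bounded_bilinear[OF c_sesquilinear] by blast

lemma c_bounded_antilinear: "bounded_antilinear (c u)"
  unfolding bounded_antilinear_def
  using c.bounded_linear_right sesquilinear_scaleC_right[OF c_sesquilinear] by blast

lemma garding_inequality:
  "\<delta> * (norm u)\<^sup>2 \<le> Re (c u u) + (\<bar>\<alpha>\<bar> + \<bar>\<beta>\<bar>) * ((norm (i u))\<^sup>2 + (norm (j u))\<^sup>2)"
proof -
  have "Re (c u u) = Re (e u u) - \<alpha> * (norm (i u))\<^sup>2 - \<beta> * (norm (j u))\<^sup>2"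
    unfolding perturbed cinner_self_norm by simp
  moreover have "\<alpha> * (norm (i u))\<^sup>2 \<le> \<bar>\<alpha>\<bar> * (norm (i u))\<^sup>2"
    and "\<beta> * (norm (j u))\<^sup>2 \<le> \<bar>\<beta>\<bar> * (norm (j u))\<^sup>2"
    by (intro mult_right_mono; simp)+
  moreover have "0 \<le> \<bar>\<alpha>\<bar> * (norm (j u))\<^sup>2 + \<bar>\<beta>\<bar> * (norm (i u))\<^sup>2"
    by simp
  ultimately show ?thesis
    using coercive[of u] by (simp only: distrib_left distrib_right)
qed

lemma almost_kernel_dist_estimate:
  fixes Y :: "nat \<Rightarrow> 'v"
  assumes Y: "\<And>n. norm (Y n) \<le> B" and cY: "\<And>n v. cmod (c (Y n) v) \<le> \<epsilon> n * norm v"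
  shows "\<delta> * (norm (Y m - Y n))\<^sup>2 \<le> 2 * B * (\<bar>\<epsilon> m\<bar> + \<bar>\<epsilon> n\<bar>)
    + (\<bar>\<alpha>\<bar> + \<bar>\<beta>\<bar>) * ((norm (i (Y m) - i (Y n)))\<^sup>2 + (norm (j (Y m) - j (Y n)))\<^sup>2)"
proof -
  define D where "D = Y m - Y n"
  have "norm D \<le> 2 * B"
    unfolding D_def using norm_triangle_ineq4[of "Y m" "Y n"] Y[of m] Y[of n] by linarith
  have "Re (c D D) \<le> cmod (c (Y m) D) + cmod (c (Y n) D)"
    unfolding D_def c.diff_left[of "Y m" "Y n"]
    using complex_Re_le_cmod norm_triangle_ineq4 order_trans by blast
  also have "\<dots> \<le> \<bar>\<epsilon> m\<bar> * norm D + \<bar>\<epsilon> n\<bar> * norm D"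
  proof -
    have "\<epsilon> k * norm D \<le> \<bar>\<epsilon> k\<bar> * norm D" for k
      by (intro mult_right_mono) auto
    then show ?thesis
      using cY[of m D] cY[of n D] by (meson add_mono order_trans)
  qed
  also have "\<dots> \<le> 2 * B * (\<bar>\<epsilon> m\<bar> + \<bar>\<epsilon> n\<bar>)"
    using mult_right_mono[OF \<open>norm D \<le> 2 * B\<close>, of "\<bar>\<epsilon> m\<bar> + \<bar>\<epsilon> n\<bar>"]
    by (simp add: algebra_simps)
  finally show ?thesis
    using garding_inequality[of D] unfolding D_def
    by (simp add: clinear_map_diff[OF i_clinear] clinear_map_diff[OF j_clinear])
qed

lemma almost_kernel_Cauchy:
  fixes Y :: "nat \<Rightarrow> 'v"
  assumes Y: "\<And>n. norm (Y n) \<le> B" and cY: "\<And>n v. cmod (c (Y n) v) \<le> \<epsilon> n * norm v"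
    and \<epsilon>: "\<epsilon> \<longlonglongrightarrow> 0" and iY: "Cauchy (\<lambda>n. i (Y n))" and jY: "Cauchy (\<lambda>n. j (Y n))"
  shows "Cauchy Y"
proof -
  define A where "A = \<bar>\<alpha>\<bar> + \<bar>\<beta>\<bar>"
  have "A \<ge> 0" and "B \<ge> 0"
    unfolding A_def using Y[of 0] norm_ge_zero[of "Y 0"] by linarith+
  note estimate = almost_kernel_dist_estimate[where Y = Y and B = B and \<epsilon> = \<epsilon>, OF Y cY, folded A_def]
  show ?thesis
  proof (rule CauchyI)
    fix r :: real
    assume "r > 0"
    define \<eta> where "\<eta> = \<delta> * r\<^sup>2 / (4 * (B + A + 1))"
    have "\<eta> > 0"
      unfolding \<eta>_def using delta_pos \<open>r > 0\<close> \<open>A \<ge> 0\<close> \<open>B \<ge> 0\<close> by simp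
    obtain N1 where N1: "\<And>n. n \<ge> N1 \<Longrightarrow> \<bar>\<epsilon> n\<bar> < \<eta>"
      using order_tendstoD(2)[OF tendsto_rabs_zero[OF \<epsilon>] \<open>\<eta> > 0\<close>]
      unfolding eventually_sequentially by auto
    obtain N2 where N2: "\<forall>m\<ge>N2. \<forall>n\<ge>N2. norm (i (Y m) - i (Y n)) < sqrt \<eta>"
      using CauchyD[OF iY real_sqrt_gt_zero[OF \<open>\<eta> > 0\<close>]] by blast
    obtain N3 where N3: "\<forall>m\<ge>N3. \<forall>n\<ge>N3. norm (j (Y m) - j (Y n)) < sqrt \<eta>"
      using CauchyD[OF jY real_sqrt_gt_zero[OF \<open>\<eta> > 0\<close>]] by blast
    have "norm (Y m - Y n) < r" if "m \<ge> max N1 (max N2 N3)" "n \<ge> max N1 (max N2 N3)" for m n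
    proof -
      have sq: "x\<^sup>2 < \<eta>" if "x < sqrt \<eta>" "0 \<le> x" for x :: real
        using power_strict_mono[OF that, of 2] \<open>\<eta> > 0\<close> by simp
      have "(norm (i (Y m) - i (Y n)))\<^sup>2 < \<eta>" and "(norm (j (Y m) - j (Y n)))\<^sup>2 < \<eta>"
        using N2 N3 that by (auto intro!: sq)
      then have "A * ((norm (i (Y m) - i (Y n)))\<^sup>2 + (norm (j (Y m) - j (Y n)))\<^sup>2) \<le> A * (2 * \<eta>)"
        using \<open>A \<ge> 0\<close> by (intro mult_left_mono) auto
      moreover have "2 * B * (\<bar>\<epsilon> m\<bar> + \<bar>\<epsilon> n\<bar>) \<le> 2 * B * (2 * \<eta>)"
        using N1[of m] N1[of n] that \<open>B \<ge> 0\<close> by (intro mult_left_mono) auto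
      moreover have "2 * B * (2 * \<eta>) + A * (2 * \<eta>) < 4 * (B + A + 1) * \<eta>"
        using \<open>\<eta> > 0\<close> mult_nonneg_nonneg[OF \<open>A \<ge> 0\<close> less_imp_le[OF \<open>\<eta> > 0\<close>]]
        by (simp add: algebra_simps)
      moreover have "4 * (B + A + 1) * \<eta> = \<delta> * r\<^sup>2"
        unfolding \<eta>_def using \<open>A \<ge> 0\<close> \<open>B \<ge> 0\<close> by simp
      ultimately have "\<delta> * (norm (Y m - Y n))\<^sup>2 < \<delta> * r\<^sup>2"
        using estimate[of m n] by linarith
      then show ?thesis
        using delta_pos \<open>r > 0\<close> by (simp add: power_less_imp_less_base)
    qed
    then show "\<exists>N. \<forall>m\<ge>N. \<forall>n\<ge>N. norm (Y m - Y n) < r"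
      by blast
  qed
qed

lemma almost_kernel_convergent_subseq:
  fixes Y :: "nat \<Rightarrow> 'v"
  assumes Y: "\<And>n. norm (Y n) \<le> B" and cY: "\<And>n v. cmod (c (Y n) v) \<le> \<epsilon> n * norm v"
    and \<epsilon>: "\<epsilon> \<longlonglongrightarrow> 0"
  shows "\<exists>s y. strict_mono s \<and> (Y \<circ> s) \<longlonglongrightarrow> y \<and> (\<forall>v. c y v = 0)"
proof -
  obtain s where "strict_mono s" and "convergent (\<lambda>n. i (Y (s n)))" and "convergent (\<lambda>n. j (Y (s n)))"
    using compact_clinear_common_convergent_subseq[where u = Y, OF i_compact j_compact Y] by blast
  have "Cauchy (Y \<circ> s)"
  proof (rule almost_kernel_Cauchy)
    show "norm ((Y \<circ> s) n) \<le> B" for n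
      using Y by simp
    show "cmod (c ((Y \<circ> s) n) v) \<le> (\<epsilon> \<circ> s) n * norm v" for n v
      using cY by simp
    show "(\<epsilon> \<circ> s) \<longlonglongrightarrow> 0"
      using \<epsilon> \<open>strict_mono s\<close> by (rule LIMSEQ_subseq_LIMSEQ)
    show "Cauchy (\<lambda>n. i ((Y \<circ> s) n))" and "Cauchy (\<lambda>n. j ((Y \<circ> s) n))"
      using \<open>convergent (\<lambda>n. i (Y (s n)))\<close> \<open>convergent (\<lambda>n. j (Y (s n)))\<close>
      by (simp_all add: convergent_Cauchy)
  qed
  then obtain y where y: "(Y \<circ> s) \<longlonglongrightarrow> y"
    using Cauchy_convergent_iff convergent_def by blast
  have "c y v = 0" for v
  proof -
    have "(\<lambda>n. c ((Y \<circ> s) n) v) \<longlonglongrightarrow> c y v"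
      using y by (intro c.tendsto tendsto_const)
    moreover have "(\<lambda>n. c ((Y \<circ> s) n) v) \<longlonglongrightarrow> 0"
    proof (rule tendsto_0_le[where K = "norm v"])
      show "(\<lambda>n. \<epsilon> (s n)) \<longlonglongrightarrow> 0"
        using LIMSEQ_subseq_LIMSEQ[OF \<epsilon> \<open>strict_mono s\<close>] by (simp add: o_def)
      have "\<epsilon> (s n) * norm v \<le> norm (\<epsilon> (s n)) * norm v" for n
        by (intro mult_right_mono) auto
      then show "\<forall>\<^sub>F n in sequentially. norm (c ((Y \<circ> s) n) v) \<le> norm (\<epsilon> (s n)) * norm v"
        using cY by (intro always_eventually allI) (metis comp_apply order_trans)
    qed
    ultimately show ?thesis
      using LIMSEQ_unique by blast
  qed
  then show ?thesis
    using \<open>strict_mono s\<close> y by blast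
qed

lemma a_priori_estimate:
  assumes kernel: "\<And>u. (\<forall>v. c u v = 0) \<Longrightarrow> u = 0"
  shows "\<exists>K. \<forall>u M. 0 \<le> M \<longrightarrow> (\<forall>v. cmod (c u v) \<le> M * norm v) \<longrightarrow> norm u \<le> K * M"
proof (rule ccontr)
  assume "\<not> ?thesis"
  then have "\<exists>u M. 0 \<le> M \<and> (\<forall>v. cmod (c u v) \<le> M * norm v) \<and> real (Suc n) * M < norm u" for n
    by (meson not_le)
  then obtain U M where M: "\<And>n. 0 \<le> M n" and cU: "\<And>n v. cmod (c (U n) v) \<le> M n * norm v"
    and U: "\<And>n. real (Suc n) * M n < norm (U n)"
    by metis
  have U0: "norm (U n) > 0" for n
    using U[of n] mult_nonneg_nonneg[OF of_nat_0_le_iff[of "Suc n"] M[of n]] by linarith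
  define Y where "Y n = (1 / norm (U n)) *\<^sub>R U n" for n
  define \<epsilon> where "\<epsilon> n = M n / norm (U n)" for n
  have normY: "norm (Y n) = 1" for n
    using U0[of n] unfolding Y_def by simp
  have cY: "cmod (c (Y n) v) \<le> \<epsilon> n * norm v" for n v
  proof -
    have "cmod (c (Y n) v) = cmod (c (U n) v) / norm (U n)"
      unfolding Y_def c.scaleR_left using U0[of n] by simp
    also have "\<dots> \<le> M n * norm v / norm (U n)"
      using cU[of n v] U0[of n] by (simp add: divide_right_mono)
    finally show ?thesis
      unfolding \<epsilon>_def by simp
  qed
  have "\<epsilon> \<longlonglongrightarrow> 0"
  proof (rule tendsto_0_le[where K = 1])
    show "(\<lambda>n. inverse (real (Suc n))) \<longlonglongrightarrow> 0"
      by (rule LIMSEQ_inverse_real_of_nat)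
    have "norm (\<epsilon> n) \<le> norm (inverse (real (Suc n))) * 1" for n
      using U[of n] U0[of n] M[of n] unfolding \<epsilon>_def by (simp add: field_simps)
    then show "\<forall>\<^sub>F n in sequentially. norm (\<epsilon> n) \<le> norm (inverse (real (Suc n))) * 1"
      by simp
  qed
  then obtain s y where "(Y \<circ> s) \<longlonglongrightarrow> y" and "\<forall>v. c y v = 0"
    using almost_kernel_convergent_subseq[of Y 1 \<epsilon>] normY cY by auto
  have "(\<lambda>n. norm ((Y \<circ> s) n)) \<longlonglongrightarrow> norm y"
    using \<open>(Y \<circ> s) \<longlonglongrightarrow> y\<close> by (rule tendsto_norm)
  then have "norm y = 1"
    using LIMSEQ_unique[OF _ tendsto_const] normY by (simp add: o_def)
  moreover have "y = 0"
    using kernel \<open>\<forall>v. c y v = 0\<close> by blast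
  ultimately show False
    by simp
qed

definition riesz_range :: "'v set" where
  "riesz_range = {h. \<exists>u. \<forall>v. c u v = e h v}"

lemma riesz_range_csubspace: "csubspace riesz_range"
  unfolding csubspace_def
proof (intro conjI ballI allI)
  have "\<forall>v. c 0 v = e 0 v"
    by (simp add: c.zero_left zero_left)
  then show "0 \<in> riesz_range"
    unfolding riesz_range_def by blast
next
  fix x y
  assume "x \<in> riesz_range" "y \<in> riesz_range"
  then obtain u w where "\<And>v. c u v = e x v" "\<And>v. c w v = e y v"
    unfolding riesz_range_def by blast
  then have "\<forall>v. c (u + w) v = e (x + y) v"
    by (simp add: c.add_left add_left)
  then show "x + y \<in> riesz_range"
    unfolding riesz_range_def by blast
next
  fix k x
  assume "x \<in> riesz_range"
  then obtain u where "\<And>v. c u v = e x v"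
    unfolding riesz_range_def by blast
  then have "\<forall>v. c (k *\<^sub>C u) v = e (k *\<^sub>C x) v"
    by (simp add: sesquilinear_scaleC_left[OF c_sesquilinear] sesquilinear_scaleC_left[OF sesquilinear])
  then show "k *\<^sub>C x \<in> riesz_range"
    unfolding riesz_range_def by blast
qed

lemma riesz_range_closed:
  assumes kernel: "\<And>u. (\<forall>v. c u v = 0) \<Longrightarrow> u = 0"
  shows "closed riesz_range"
  unfolding closed_sequential_limits riesz_range_def
proof (intro allI impI)
  fix x h
  assume "(\<forall>n. x n \<in> {h. \<exists>u. \<forall>v. c u v = e h v}) \<and> x \<longlonglongrightarrow> h"
  then have x: "x \<longlonglongrightarrow> h" and "\<forall>n. \<exists>w. \<forall>v. c w v = e (x n) v"
    by auto
  then obtain u where u: "\<And>n v. c (u n) v = e (x n) v"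
    by metis
  obtain K where K: "\<And>u M. 0 \<le> M \<Longrightarrow> \<forall>v. cmod (c u v) \<le> M * norm v \<Longrightarrow> norm u \<le> K * M"
    using a_priori_estimate[OF kernel] by blast
  have "norm (u m - u n) \<le> K * \<bar>C\<bar> * norm (x m - x n)" for m n
  proof -
    have "cmod (c (u m - u n) v) \<le> \<bar>C\<bar> * norm (x m - x n) * norm v" for v
    proof -
      have "cmod (c (u m - u n) v) \<le> C * norm (x m - x n) * norm v"
        using bound[of "x m - x n" v] by (simp add: c.diff_left diff_left u)
      also have "\<dots> \<le> \<bar>C\<bar> * norm (x m - x n) * norm v"
        by (intro mult_right_mono) auto
      finally show ?thesis .
    qed
    then show ?thesis
      using K[of "\<bar>C\<bar> * norm (x m - x n)" "u m - u n"] by (simp add: mult.assoc)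
  qed
  then have "Cauchy u"
    using Cauchy_if_dominated[OF LIMSEQ_imp_Cauchy[OF x]] by blast
  then obtain u0 where u0: "u \<longlonglongrightarrow> u0"
    using Cauchy_convergent_iff convergent_def by blast
  have "c u0 v = e h v" for v
  proof -
    have "(\<lambda>n. c (u n) v) \<longlonglongrightarrow> c u0 v"
      using u0 by (intro c.tendsto tendsto_const)
    moreover have "(\<lambda>n. c (u n) v) \<longlonglongrightarrow> e h v"
      unfolding u using x by (intro tendsto tendsto_const)
    ultimately show ?thesis
      by (rule LIMSEQ_unique)
  qed
  then show "h \<in> {h. \<exists>u. \<forall>v. c u v = e h v}"
    by blast
qed

text \<open>\<open>riesz_range\<close> is closed by the a priori estimate, and by symmetry of \<open>c\<close> a vector
  \<open>e\<close>-orthogonal to it lies in the kernel of \<open>c\<close>; hence it is everything.\<close>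

theorem fredholm_alternative:
  assumes kernel: "\<And>u. (\<forall>v. c u v = 0) \<Longrightarrow> u = 0" and "bounded_antilinear l"
  shows "\<exists>u. \<forall>v. c u v = l v"
proof -
  obtain g where g: "\<And>v. l v = e g v"
    using riesz_representation[OF assms(2)] by blast
  obtain p where "p \<in> riesz_range" and orth: "\<And>h. h \<in> riesz_range \<Longrightarrow> e (g - p) h = 0"
    using orthogonal_projection_exists[OF riesz_range_closed[OF kernel] riesz_range_csubspace] by blast
  have "c u (g - p) = 0" for u
  proof -
    obtain h where h: "\<And>v. c u v = e h v"
      using riesz_representation[OF c_bounded_antilinear] by blast
    then have "e (g - p) h = 0"
      by (intro orth) (auto simp: riesz_range_def)
    then show ?thesis
      using h swap[of h "g - p"] by simp
  qed
  moreover have "c (g - p) v = cnj (c v (g - p))" for v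
    using c_symmetric unfolding form_symmetric_def by blast
  ultimately have "\<forall>v. c (g - p) v = 0"
    by (metis complex_cnj_zero)
  then have "g = p"
    using kernel[of "g - p"] by simp
  then obtain u where "\<And>v. c u v = e g v"
    using \<open>p \<in> riesz_range\<close> unfolding riesz_range_def by blast
  then show ?thesis
    using g by metis
qed

end

section \<open>The Dirichlet-to-Neumann graph and the eigenvalue problem\<close>

lemma assoc_op_eigenpair:
  assumes "clinear_map i" and "\<And>v. b u v = \<gamma> * cinner (i u) (i v)"
  shows "(i u, \<gamma> *\<^sub>C i u) \<in> assoc_op i b"
proof -
  have "\<gamma> *\<^sub>C i u \<in> closure (range i)"
    using clinear_map_scaleC[OF assms(1), of \<gamma> u] closure_subset by (metis rangeI subsetD)
  moreover have "\<forall>v. b u v = cinner (\<gamma> *\<^sub>C i u) (i v)"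
    using assms(2) by (simp add: cinner_scaleC_left)
  ultimately show ?thesis
    unfolding assoc_op_def by blast
qed

lemma eigenvalue_assoc_op_iff:
  assumes "inj i" and "clinear_map i"
  shows "eigenvalue_of (assoc_op i b) \<gamma> \<longleftrightarrow> (\<exists>u. u \<noteq> 0 \<and> (\<forall>v. b u v = \<gamma> * cinner (i u) (i v)))"
proof
  assume "eigenvalue_of (assoc_op i b) \<gamma>"
  then obtain u where "i u \<noteq> 0" and "\<forall>v. b u v = cinner (\<gamma> *\<^sub>C i u) (i v)"
    unfolding eigenvalue_of_def assoc_op_def by auto
  moreover have "u \<noteq> 0"
    using \<open>i u \<noteq> 0\<close> clinear_map_zero[OF assms(2)] by auto
  ultimately show "\<exists>u. u \<noteq> 0 \<and> (\<forall>v. b u v = \<gamma> * cinner (i u) (i v))"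
    by (auto simp: cinner_scaleC_left)
next
  assume "\<exists>u. u \<noteq> 0 \<and> (\<forall>v. b u v = \<gamma> * cinner (i u) (i v))"
  then obtain u where "u \<noteq> 0" and "\<And>v. b u v = \<gamma> * cinner (i u) (i v)"
    by blast
  moreover have "i u \<noteq> 0"
    using \<open>u \<noteq> 0\<close> assms clinear_map_zero by (metis injD)
  ultimately show "eigenvalue_of (assoc_op i b) \<gamma>"
    unfolding eigenvalue_of_def using assoc_op_eigenpair[OF assms(2)] by blast
qed

lemma eigenvalue_in_spectrum_op:
  assumes "(x, \<mu> *\<^sub>C x) \<in> G" and "x \<noteq> 0"
  shows "\<mu> \<in> spectrum_op X G"
proof -
  have "\<not> (\<forall>(x', z)\<in>G. norm x' \<le> K * norm (z - \<mu> *\<^sub>C x'))" for K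
    using assms by fastforce
  then show ?thesis
    unfolding spectrum_op_def resolvent_set_op_def by blast
qed

lemma closure_add_mem:
  fixes S :: "'a::real_normed_vector set"
  assumes "\<And>x. x \<in> S \<Longrightarrow> w + x \<in> S" and "y \<in> closure S"
  shows "w + y \<in> closure S"
proof -
  have "(+) w ` closure S = closure ((+) w ` S)"
    by (rule closure_translation[symmetric])
  also have "\<dots> \<subseteq> closure S"
    using assms(1) by (intro closure_mono) blast
  finally show ?thesis
    using assms(2) by blast
qed

lemma bounded_antilinear_cinner_left:
  assumes "bounded_linear j" and "clinear_map j"
  shows "bounded_antilinear (\<lambda>v. cinner y (j v))"
  unfolding bounded_antilinear_def
  using bounded_linear_compose[OF bounded_bilinear.bounded_linear_right[OF bounded_bilinear_cinner] assms(1)]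
  by (simp add: clinear_map_scaleC[OF assms(2)] cinner_scaleC_right)

locale standing_setting =
  fixes i :: "'v::chilbert_space \<Rightarrow> 'h::chilbert_space" and j :: "'v \<Rightarrow> 'k::chilbert_space"
    and a :: "'v \<Rightarrow> 'v \<Rightarrow> complex"
  assumes i_inj: "inj i" and i_compact: "compact_clinear i" and j_compact: "compact_clinear j"
    and a_sesq: "sesquilinear a" and a_sym: "form_symmetric a" and a_cont: "form_continuous a"
    and a_ell: "form_elliptic a i"
begin

text \<open>\<open>pencil \<lambda> \<mu>\<close> is \<open>\<aa>\<^sub>\<mu> - \<lambda>(\<cdot>,\<cdot>)\<^sub>H = \<bb>\<^sub>\<lambda> - \<mu>(j\<cdot>, j\<cdot>)\<^sub>K\<close> in the notation of the paper.\<close>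

definition pencil :: "real \<Rightarrow> real \<Rightarrow> 'v \<Rightarrow> 'v \<Rightarrow> complex" where
  "pencil lam mu u v = a u v - complex_of_real lam * cinner (i u) (i v)
     - complex_of_real mu * cinner (j u) (j v)"

lemma i_clinear: "clinear_map i"
  using i_compact unfolding compact_clinear_def by blast

lemma j_clinear: "clinear_map j"
  using j_compact unfolding compact_clinear_def by blast

lemma pencil_compact_perturbation:
  "\<exists>e C \<delta> \<alpha>. compact_perturbation e C \<delta> i j \<alpha> mu (pencil lam mu)"
proof -
  obtain \<omega> \<delta> where "\<delta> > 0" and ell: "\<And>u. Re (a u u) + \<omega> * (norm (i u))\<^sup>2 \<ge> \<delta> * (norm u)\<^sup>2"
    using a_ell unfolding form_elliptic_def by blast
  obtain Ca where Ca: "\<And>u v. cmod (a u v) \<le> Ca * norm u * norm v"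
    using a_cont unfolding form_continuous_def by blast
  obtain Ki where Ki: "\<And>x. norm (i x) \<le> Ki * norm x"
    using compact_clinear_bound[OF i_compact] by blast
  define e where "e u v = a u v - complex_of_real (- \<omega>) * cinner (i u) (i v)" for u v
  have "coercive_form e (Ca + cmod (complex_of_real (- \<omega>)) * Ki\<^sup>2) \<delta>"
  proof
    show "sesquilinear e"
      unfolding e_def[abs_def] by (rule sesquilinear_minus_cinner[OF a_sesq i_clinear])
    show "form_symmetric e"
      unfolding e_def[abs_def] by (rule form_symmetric_minus_cinner[OF a_sym])
    show "cmod (e u v) \<le> (Ca + cmod (complex_of_real (- \<omega>)) * Ki\<^sup>2) * norm u * norm v" for u v
      unfolding e_def by (rule cmod_minus_cinner_le[OF Ca Ki])
    show "\<delta> * (norm u)\<^sup>2 \<le> Re (e u u)" for u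
      using ell[of u] unfolding e_def cinner_self_norm by simp
  qed (rule \<open>\<delta> > 0\<close>)
  moreover have "pencil lam mu u v = e u v - complex_of_real (\<omega> + lam) * cinner (i u) (i v)
      - complex_of_real mu * cinner (j u) (j v)" for u v
    unfolding pencil_def e_def by (simp add: algebra_simps)
  ultimately show ?thesis
    using i_compact j_compact by (blast intro: compact_perturbation.intro compact_perturbation_axioms.intro)
qed

lemma eigenvalue_iff_pencil_kernel:
  "eigenvalue_of (assoc_op i (\<lambda>u v. a u v - complex_of_real mu * cinner (j u) (j v))) (complex_of_real lam)
    \<longleftrightarrow> (\<exists>u. u \<noteq> 0 \<and> (\<forall>v. pencil lam mu u v = 0))"
  unfolding eigenvalue_assoc_op_iff[OF i_inj i_clinear] pencil_def by (simp add: algebra_simps)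

lemma DtN_graph_iff_pencil:
  "(x, \<psi>) \<in> DtN_graph i j a lam \<longleftrightarrow>
    (\<exists>u. x = j u \<and> (\<forall>v. pencil lam mu u v = cinner (\<psi> - complex_of_real mu *\<^sub>C x) (j v)))"
  unfolding DtN_graph_def pencil_def by (auto simp: cinner_diff_left cinner_scaleC_left)

lemma DtN_graph_add:
  assumes "(x, \<psi>) \<in> DtN_graph i j a lam" and "(y, \<phi>) \<in> DtN_graph i j a lam"
  shows "(x + y, \<psi> + \<phi>) \<in> DtN_graph i j a lam"
proof -
  obtain u w where "x = j u" "y = j w"
    and "\<And>v. a u v - complex_of_real lam * cinner (i u) (i v) = cinner \<psi> (j v)"
    and "\<And>v. a w v - complex_of_real lam * cinner (i w) (i v) = cinner \<phi> (j v)"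
    using assms unfolding DtN_graph_def by blast
  moreover have "a (u + w) v = a u v + a w v" for v
    using a_sesq unfolding sesquilinear_def by blast
  ultimately show ?thesis
    unfolding DtN_graph_def
    by (auto intro!: exI[of _ "u + w"] simp: clinear_map_add[OF j_clinear] clinear_map_add[OF i_clinear]
        cinner_add_left algebra_simps)
qed

lemma DtN_graph_scaleC:
  assumes "(x, \<psi>) \<in> DtN_graph i j a lam"
  shows "(k *\<^sub>C x, k *\<^sub>C \<psi>) \<in> DtN_graph i j a lam"
proof -
  obtain u where "x = j u" and "\<And>v. a u v - complex_of_real lam * cinner (i u) (i v) = cinner \<psi> (j v)"
    using assms unfolding DtN_graph_def by blast
  then show ?thesis
    unfolding DtN_graph_def
    by (auto intro!: exI[of _ "k *\<^sub>C u"] simp: clinear_map_scaleC[OF j_clinear] clinear_map_scaleC[OF i_clinear]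
        sesquilinear_scaleC_left[OF a_sesq] cinner_scaleC_left algebra_simps)
qed

lemma pencil_kernel_in_DtN_spectrum:
  assumes no_Dir_eigvec: "\<not> (\<exists>x. eigenvector_of (assoc_op i a) x \<and> x \<in> i ` {w. j w = 0})"
    and "u \<noteq> 0" and kernel: "\<And>v. pencil lam mu u v = 0"
  shows "complex_of_real mu \<in> graph_spectrum (DtN_graph i j a lam)"
proof -
  have "j u \<noteq> 0"
  proof
    assume "j u = 0"
    then have "\<And>v. a u v = complex_of_real lam * cinner (i u) (i v)"
      using kernel unfolding pencil_def by simp
    moreover have "i u \<noteq> 0"
      using \<open>u \<noteq> 0\<close> i_inj clinear_map_zero[OF i_clinear] by (metis injD)
    ultimately have "eigenvector_of (assoc_op i a) (i u)"
      unfolding eigenvector_of_def using assoc_op_eigenpair[OF i_clinear] by blast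
    then show False
      using no_Dir_eigvec \<open>j u = 0\<close> by blast
  qed
  define N where "N = DtN_graph i j a lam"
  have "\<forall>v. pencil lam mu u v = cinner (complex_of_real mu *\<^sub>C j u - complex_of_real mu *\<^sub>C j u) (j v)"
    using kernel by simp
  then have eig: "(j u, complex_of_real mu *\<^sub>C j u) \<in> N"
    unfolding N_def DtN_graph_iff_pencil[where mu = mu] by blast
  moreover have "(complex_of_real mu *\<^sub>C j u, complex_of_real mu *\<^sub>C (complex_of_real mu *\<^sub>C j u)) \<in> N"
    using DtN_graph_scaleC[OF eig[unfolded N_def]] unfolding N_def .
  ultimately have "j u \<in> closure (Domain N)" and "complex_of_real mu *\<^sub>C j u \<in> closure (Domain N)"
    by (meson DomainI closure_subset subsetD)+
  then have "(j u, complex_of_real mu *\<^sub>C j u) \<in> single_valued_part N"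
    unfolding single_valued_part_def using eig by blast
  then show ?thesis
    unfolding graph_spectrum_def N_def[symmetric] using \<open>j u \<noteq> 0\<close> by (rule eigenvalue_in_spectrum_op)
qed

lemma DtN_shift_surjective:
  assumes kernel: "\<And>u. (\<forall>v. pencil lam mu u v = 0) \<Longrightarrow> u = 0"
    and y: "y \<in> closure (Domain (DtN_graph i j a lam))"
  shows "\<exists>x z. (x, z) \<in> single_valued_part (DtN_graph i j a lam) \<and> z - complex_of_real mu *\<^sub>C x = y"
proof -
  obtain e C \<delta> \<alpha> where "compact_perturbation e C \<delta> i j \<alpha> mu (pencil lam mu)"
    using pencil_compact_perturbation by blast
  then interpret P: compact_perturbation e C \<delta> i j \<alpha> mu "pencil lam mu" .
  define N where "N = DtN_graph i j a lam"
  obtain u where u: "\<And>v. pencil lam mu u v = cinner y (j v)"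
    using P.fredholm_alternative[OF kernel bounded_antilinear_cinner_left] 
      compact_clinear_bounded_linear[OF j_compact] j_clinear by blast
  define z where "z = complex_of_real mu *\<^sub>C j u + y"
  have "\<forall>v. pencil lam mu u v = cinner (z - complex_of_real mu *\<^sub>C j u) (j v)"
    unfolding z_def using u by simp
  then have uz: "(j u, z) \<in> N"
    unfolding N_def DtN_graph_iff_pencil[where mu = mu] by blast
  have "complex_of_real mu *\<^sub>C j u + x \<in> Domain N" if x: "x \<in> Domain N" for x
  proof -
    obtain \<psi> where "(x, \<psi>) \<in> N"
      using x by blast
    then have "(complex_of_real mu *\<^sub>C j u + x, complex_of_real mu *\<^sub>C z + \<psi>) \<in> N"
      using DtN_graph_add[OF DtN_graph_scaleC] uz unfolding N_def by blast
    then show ?thesis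
      by blast
  qed
  then have "z \<in> closure (Domain N)"
    unfolding z_def using y[folded N_def] by (rule closure_add_mem)
  moreover have "j u \<in> closure (Domain N)"
    using uz by (meson DomainI closure_subset subsetD)
  ultimately have "(j u, z) \<in> single_valued_part N"
    unfolding single_valued_part_def using uz by blast
  moreover have "z - complex_of_real mu *\<^sub>C j u = y"
    unfolding z_def by simp
  ultimately show ?thesis
    unfolding N_def by blast
qed

lemma DtN_shift_bounded_below:
  assumes kernel: "\<And>u. (\<forall>v. pencil lam mu u v = 0) \<Longrightarrow> u = 0"
  shows "\<exists>K. \<forall>(x, z)\<in>single_valued_part (DtN_graph i j a lam).
    norm x \<le> K * norm (z - complex_of_real mu *\<^sub>C x)"
proof -
  obtain e C \<delta> \<alpha> where "compact_perturbation e C \<delta> i j \<alpha> mu (pencil lam mu)"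
    using pencil_compact_perturbation by blast
  then interpret P: compact_perturbation e C \<delta> i j \<alpha> mu "pencil lam mu" .
  obtain K where K: "\<And>u M. 0 \<le> M \<Longrightarrow> \<forall>v. cmod (pencil lam mu u v) \<le> M * norm v \<Longrightarrow> norm u \<le> K * M"
    using P.a_priori_estimate[OF kernel] by blast
  obtain Kj where "Kj > 0" and Kj: "\<And>x. norm (j x) \<le> Kj * norm x"
    using compact_clinear_bound[OF j_compact] by blast
  have "norm x \<le> Kj * K * Kj * norm (z - complex_of_real mu *\<^sub>C x)"
    if xz: "(x, z) \<in> DtN_graph i j a lam" for x z
  proof -
    define r where "r = z - complex_of_real mu *\<^sub>C x"
    obtain u where "x = j u" and u: "\<And>v. pencil lam mu u v = cinner r (j v)"
      using xz unfolding DtN_graph_iff_pencil[where mu = mu] r_def[symmetric] by blast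
    have "cmod (pencil lam mu u v) \<le> norm r * Kj * norm v" for v
      unfolding u mult.assoc
      using cinner_cauchy_schwarz[of r "j v"] mult_left_mono[OF Kj[of v] norm_ge_zero[of r]] by linarith
    then have "norm u \<le> K * (norm r * Kj)"
      using K \<open>Kj > 0\<close> by simp
    then have "Kj * norm u \<le> Kj * (K * (norm r * Kj))"
      using \<open>Kj > 0\<close> by simp
    then show ?thesis
      using Kj[of u] \<open>x = j u\<close> unfolding r_def by (simp add: algebra_simps)
  qed
  then show ?thesis
    unfolding single_valued_part_def by blast
qed

end

theorem lemma2p5:
  fixes i :: "'v::chilbert_space \<Rightarrow> 'h::chilbert_space"
    and j :: "'v \<Rightarrow> 'k::chilbert_space"
    and a :: "'v \<Rightarrow> 'v \<Rightarrow> complex"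
    and lam mu :: real
  assumes i_inj: "inj i"
    and i_compact: "compact_clinear i"
    and j_compact: "compact_clinear j"
    and a_sesq: "sesquilinear a"
    and a_pos: "form_positive a"
    and a_sym: "form_symmetric a"
    and a_cont: "form_continuous a"
    and a_ell: "form_elliptic a i"
    and no_Dir_eigvec: "\<not> (\<exists>x. eigenvector_of (assoc_op i a) x \<and> x \<in> i ` {w. j w = 0})"
  shows "eigenvalue_of
           (assoc_op i (\<lambda>u v. a u v - complex_of_real mu * cinner (j u) (j v)))
           (complex_of_real lam)
         \<longleftrightarrow> complex_of_real mu \<in> graph_spectrum (DtN_graph i j a lam)"
proof -
  interpret standing_setting i j a
    using i_inj i_compact j_compact a_sesq a_sym a_cont a_ell by unfold_locales
  show ?thesis
    unfolding eigenvalue_iff_pencil_kernel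
  proof
    assume "\<exists>u. u \<noteq> 0 \<and> (\<forall>v. pencil lam mu u v = 0)"
    then show "complex_of_real mu \<in> graph_spectrum (DtN_graph i j a lam)"
      using pencil_kernel_in_DtN_spectrum[OF no_Dir_eigvec] by blast
  next
    assume spectrum: "complex_of_real mu \<in> graph_spectrum (DtN_graph i j a lam)"
    show "\<exists>u. u \<noteq> 0 \<and> (\<forall>v. pencil lam mu u v = 0)"
    proof (rule ccontr)
      assume "\<not> (\<exists>u. u \<noteq> 0 \<and> (\<forall>v. pencil lam mu u v = 0))"
      then have kernel: "\<And>u. (\<forall>v. pencil lam mu u v = 0) \<Longrightarrow> u = 0"
        by blast
      have "complex_of_real mu \<in> resolvent_set_op (closure (Domain (DtN_graph i j a lam)))
          (single_valued_part (DtN_graph i j a lam))"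
        unfolding resolvent_set_op_def
        using DtN_shift_surjective[OF kernel] DtN_shift_bounded_below[OF kernel] by blast
      then show False
        using spectrum unfolding graph_spectrum_def spectrum_op_def by blast
    qed
  qed
qed

end
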